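(* Let $N\le M$ be positive integers, let $\mathcal{H}=\mathcal{H}_A\otimes\mathcal{H}_B$ with $\dim\mathcal{H}_A=N$ and $\dim\mathcal{H}_B=M$, and fix a unit vector $\ket{\phi_0}\in\mathcal{H}$ with local purity $\pi_0=\mathrm{Tr}_A\big[(\mathrm{Tr}_B\ket{\phi_0}\bra{\phi_0})^2\big]$. Let $\ket{\phi}\in\mathcal{H}$ be a random vector whose $NM$ components $X_{i\mu}$ ($1\le i\le N$, $1\le\mu\le M$) in a product basis are independent, identically distributed, circularly symmetric complex Gaussian random variables with $\mathbb{E}[X_{i\mu}]=0$ and $\mathbb{E}[|X_{i\mu}|^2]=1/(NM)$ (so that $\mathbb{E}[X_{i\mu}X_{j\nu}]=0$ and $\mathbb{E}[X_{i\mu}X^*_{j\nu}]=\delta_{ij}\delta_{\mu\nu}/(NM)$). For $\epsilon\in[0,1]$ define $\ket{\psi}=\epsilon\ket{\phi_0}+\sqrt{1-\epsilon^2}\,\ket{\phi}$, $\rho_A=\mathrm{Tr}_B\ket{\psi}\bra{\psi}$ and $\pi_{AB}(\ket{\psi})=\mathrm{Tr}_A\rho_A^2$. Then $$\mathbb{E}\big[\pi_{AB}(\ket{\psi})\big]=\epsilon^4\pi_0+(1-\epsilon^4)\,\frac{M+N}{MN}.$$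
   Context: $\mathrm{Tr}_B$ denotes the partial trace over the factor $\mathcal{H}_B$; $\ket{\psi}\bra{\psi}$ is the rank-one operator associated with $\ket{\psi}$ (which is not normalized in general). The expectation is over the Gaussian vector $\ket{\phi}$, with $\ket{\phi_0}$ and $\epsilon$ fixed. *)

theory Defs
  imports "HOL-Probability.Probability"
begin

(* A vector in H_A (x) H_B (dim N, dim M) is represented by its components
   psi i mu in a product basis, 0 <= i < N, 0 <= mu < M. *)

definition sqnorm :: "nat \<Rightarrow> nat \<Rightarrow> (nat \<Rightarrow> nat \<Rightarrow> complex) \<Rightarrow> real" where
  "sqnorm N M psi = (\<Sum>i<N. \<Sum>mu<M. (cmod (psi i mu))\<^sup>2)"

definition ptrace_B :: "nat \<Rightarrow> (nat \<Rightarrow> nat \<Rightarrow> complex) \<Rightarrow> nat \<Rightarrow> nat \<Rightarrow> complex" where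
  "ptrace_B M psi i j = (\<Sum>mu<M. psi i mu * cnj (psi j mu))"

definition local_purity :: "nat \<Rightarrow> nat \<Rightarrow> (nat \<Rightarrow> nat \<Rightarrow> complex) \<Rightarrow> complex" where
  "local_purity N M psi = (\<Sum>i<N. \<Sum>j<N. ptrace_B M psi i j * ptrace_B M psi j i)"

(* Z is a circularly symmetric complex Gaussian with mean 0 and E|Z|^2 = v:
   real and imaginary parts independent, each N(0, v/2). *)
definition circ_gaussian :: "'a measure \<Rightarrow> ('a \<Rightarrow> complex) \<Rightarrow> real \<Rightarrow> bool" where
  "circ_gaussian P Z v \<longleftrightarrow>
     distributed P lborel (\<lambda>w. Re (Z w)) (\<lambda>x. ennreal (normal_density 0 (sqrt (v / 2)) x)) \<and>
     distributed P lborel (\<lambda>w. Im (Z w)) (\<lambda>x. ennreal (normal_density 0 (sqrt (v / 2)) x)) \<and>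
     prob_space.indep_var P borel (\<lambda>w. Re (Z w)) borel (\<lambda>w. Im (Z w))"

end

theory Submission
  imports Defs
begin

text \<open>
  Write \<open>\<psi> = a + s X\<close> with \<open>a = \<epsilon> \<phi>\<^sub>0\<close> and \<open>s = sqrt (1 - \<epsilon>\<^sup>2)\<close>. Its entries are independent, with
  \<open>E \<psi>\<^sub>p = a\<^sub>p\<close>, \<open>E |\<psi>\<^sub>p|\<^sup>2 = |a\<^sub>p|\<^sup>2 + t\<close> and \<open>E |\<psi>\<^sub>p|\<^sup>4 = |a\<^sub>p|\<^sup>4 + 4 |a\<^sub>p|\<^sup>2 t + 2 t\<^sup>2\<close>, where
  \<open>t = s\<^sup>2 / (N M)\<close>; the fourth moment follows by splitting into independent real and
  imaginary Gaussian parts. The purity is the sum over \<open>i, j, \<mu>, \<nu>\<close> of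
  \<open>\<psi>\<^sub>i\<^sub>\<mu> \<psi>\<^sub>j\<^sub>\<mu>\<^sup>* \<psi>\<^sub>j\<^sub>\<nu> \<psi>\<^sub>i\<^sub>\<nu>\<^sup>*\<close>. By independence the expectation of each term is the
  same product of the \<open>a\<close>'s, corrected only when \<open>i = j\<close> or \<open>\<mu> = \<nu>\<close>, i.e. when a modulus
  \<open>|\<psi>\<^sub>p|\<^sup>2\<close> appears. Summing the corrections gives
  \<open>E \<pi>(\<psi>) = \<pi>(a) + 2 t (N + M) \<parallel>a\<parallel>\<^sup>2 + t\<^sup>2 N M (N + M)\<close>, which for \<open>\<parallel>a\<parallel>\<^sup>2 = \<epsilon>\<^sup>2\<close> is the claim.
\<close>

lemma (in prob_space) centered_normal_moment:
  fixes x :: "'a \<Rightarrow> real"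
  assumes x: "distributed M lborel x (\<lambda>t. ennreal (normal_density 0 \<sigma> t))" and \<sigma>: "0 < \<sigma>"
  shows "has_bochner_integral M (\<lambda>w. x w ^ k) (\<integral>t. normal_density 0 \<sigma> t * t ^ k \<partial>lborel)"
proof -
  have "integrable lborel (\<lambda>t. normal_density 0 \<sigma> t * t ^ k)"
    using integrable_normal_moment[of \<sigma> 0 k] \<sigma> by simp
  then show ?thesis
    using distributed_integrable[OF x, of "\<lambda>t. t ^ k"] distributed_integral[OF x, of "\<lambda>t. t ^ k"]
    by (simp add: has_bochner_integral_iff)
qed

lemma (in prob_space) affine_normal_moments:
  fixes x :: "'a \<Rightarrow> real"
  assumes x: "distributed M lborel x (\<lambda>t. ennreal (normal_density 0 \<sigma> t))" and \<sigma>: "0 < \<sigma>"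
  shows "has_bochner_integral M (\<lambda>w. c + d * x w) c"
    and "has_bochner_integral M (\<lambda>w. (c + d * x w)\<^sup>2) (c\<^sup>2 + d\<^sup>2 * \<sigma>\<^sup>2)"
    and "has_bochner_integral M (\<lambda>w. (c + d * x w) ^ 4) (c ^ 4 + 6 * c\<^sup>2 * d\<^sup>2 * \<sigma>\<^sup>2 + 3 * d ^ 4 * \<sigma> ^ 4)"
proof -
  have const: "has_bochner_integral M (\<lambda>_. c') c'" for c' :: real
    by (simp add: has_bochner_integral_iff prob_space)
  have odd: "has_bochner_integral M (\<lambda>w. x w ^ (2 * k + 1)) 0" for k
    using centered_normal_moment[OF x \<sigma>, of "2 * k + 1"] integral_normal_moment_odd[OF \<sigma>, of 0 k]
    by simp
  have even: "has_bochner_integral M (\<lambda>w. x w ^ (2 * k)) (fact (2 * k) / ((2 / \<sigma>\<^sup>2) ^ k * fact k))" for k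
    using centered_normal_moment[OF x \<sigma>, of "2 * k"] integral_normal_moment_even[OF \<sigma>, of 0 k]
    by simp
  have m1: "has_bochner_integral M (\<lambda>w. x w ^ 1) 0" using odd[of 0] by simp
  have m2: "has_bochner_integral M (\<lambda>w. x w ^ 2) (\<sigma>\<^sup>2)" using even[of 1] \<sigma> by simp
  have m3: "has_bochner_integral M (\<lambda>w. x w ^ 3) 0" using odd[of 1] by (simp add: numeral_3_eq_3)
  have m4: "has_bochner_integral M (\<lambda>w. x w ^ 4) (3 * \<sigma> ^ 4)"
    using even[of 2] \<sigma> by (simp add: fact_numeral field_simps power2_eq_square power4_eq_xxxx)
  have "has_bochner_integral M (\<lambda>w. c + d * x w ^ 1) (c + d * 0)"
    by (intro has_bochner_integral_add has_bochner_integral_mult_right const m1)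
  then show "has_bochner_integral M (\<lambda>w. c + d * x w) c"
    by simp
  have "has_bochner_integral M (\<lambda>w. c\<^sup>2 + (2 * c * d) * x w ^ 1 + d\<^sup>2 * x w ^ 2)
      (c\<^sup>2 + (2 * c * d) * 0 + d\<^sup>2 * \<sigma>\<^sup>2)"
    by (intro has_bochner_integral_add has_bochner_integral_mult_right const m1 m2)
  then show "has_bochner_integral M (\<lambda>w. (c + d * x w)\<^sup>2) (c\<^sup>2 + d\<^sup>2 * \<sigma>\<^sup>2)"
    by (simp add: power2_sum algebra_simps)
  have expand4: "(\<lambda>w. (c + d * x w) ^ 4) = (\<lambda>w. c ^ 4 + (4 * c ^ 3 * d) * x w ^ 1
      + (6 * c\<^sup>2 * d\<^sup>2) * x w ^ 2 + (4 * c * d ^ 3) * x w ^ 3 + d ^ 4 * x w ^ 4)"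
    by (simp add: fun_eq_iff power2_eq_square power3_eq_cube power4_eq_xxxx algebra_simps)
  have "has_bochner_integral M (\<lambda>w. c ^ 4 + (4 * c ^ 3 * d) * x w ^ 1 + (6 * c\<^sup>2 * d\<^sup>2) * x w ^ 2
      + (4 * c * d ^ 3) * x w ^ 3 + d ^ 4 * x w ^ 4)
      (c ^ 4 + (4 * c ^ 3 * d) * 0 + (6 * c\<^sup>2 * d\<^sup>2) * \<sigma>\<^sup>2 + (4 * c * d ^ 3) * 0 + d ^ 4 * (3 * \<sigma> ^ 4))"
    by (intro has_bochner_integral_add has_bochner_integral_mult_right const m1 m2 m3 m4)
  then show "has_bochner_integral M (\<lambda>w. (c + d * x w) ^ 4) (c ^ 4 + 6 * c\<^sup>2 * d\<^sup>2 * \<sigma>\<^sup>2 + 3 * d ^ 4 * \<sigma> ^ 4)"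
    unfolding expand4 by (simp add: algebra_simps)
qed

lemma (in prob_space) indep_var_has_bochner_integral_sum_square:
  fixes A B :: "'a \<Rightarrow> real"
  assumes AB: "indep_var borel A borel B"
    and "has_bochner_integral M A \<alpha>" "has_bochner_integral M B \<beta>"
    and "has_bochner_integral M (\<lambda>w. (A w)\<^sup>2) \<alpha>2" "has_bochner_integral M (\<lambda>w. (B w)\<^sup>2) \<beta>2"
  shows "has_bochner_integral M (\<lambda>w. (A w + B w)\<^sup>2) (\<alpha>2 + 2 * (\<alpha> * \<beta>) + \<beta>2)"
proof -
  have "has_bochner_integral M (\<lambda>w. A w * B w) (\<alpha> * \<beta>)"
    using indep_var_lebesgue_integral[OF AB] indep_var_integrable[OF AB] assms(2,3)
    by (auto simp: has_bochner_integral_iff)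
  moreover have "(\<lambda>w. (A w + B w)\<^sup>2) = (\<lambda>w. (A w)\<^sup>2 + 2 * (A w * B w) + (B w)\<^sup>2)"
    by (simp add: fun_eq_iff power2_sum)
  ultimately show ?thesis
    by (simp only:) (intro has_bochner_integral_add has_bochner_integral_mult_right assms(4,5))
qed

lemma (in prob_space) circ_gaussian_affine_moments:
  assumes Z: "circ_gaussian M Z v" and v: "0 < v"
  shows "has_bochner_integral M (\<lambda>w. a + of_real s * Z w) a"
    and "has_bochner_integral M (\<lambda>w. (a + of_real s * Z w) * cnj (a + of_real s * Z w))
           (of_real ((cmod a)\<^sup>2 + s\<^sup>2 * v))"
    and "has_bochner_integral M (\<lambda>w. ((a + of_real s * Z w) * cnj (a + of_real s * Z w))\<^sup>2)
           (of_real ((cmod a) ^ 4 + 4 * (cmod a)\<^sup>2 * (s\<^sup>2 * v) + 2 * (s\<^sup>2 * v)\<^sup>2))"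
proof -
  define \<sigma> where "\<sigma> = sqrt (v / 2)"
  have \<sigma>: "0 < \<sigma>" "\<sigma>\<^sup>2 = v / 2"
    using v by (simp_all add: \<sigma>_def)
  define x where "x w = Re (Z w)" for w
  define y where "y w = Im (Z w)" for w
  have x: "distributed M lborel x (\<lambda>t. ennreal (normal_density 0 \<sigma> t))"
    and y: "distributed M lborel y (\<lambda>t. ennreal (normal_density 0 \<sigma> t))"
    and xy: "indep_var borel x borel y"
    using Z unfolding circ_gaussian_def x_def y_def \<sigma>_def by auto
  define A where "A = (\<lambda>w. (Re a + s * x w)\<^sup>2)"
  define B where "B = (\<lambda>w. (Im a + s * y w)\<^sup>2)"
  have "(a + of_real s * Z w) * cnj (a + of_real s * Z w) = of_real (A w + B w)" for w
    by (subst complex_mult_cnj) (simp add: A_def B_def x_def y_def)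
  then have sqnorm_AB: "(\<lambda>w. (a + of_real s * Z w) * cnj (a + of_real s * Z w)) = (\<lambda>w. of_real (A w + B w))"
    and sqnorm_AB_sq: "(\<lambda>w. ((a + of_real s * Z w) * cnj (a + of_real s * Z w))\<^sup>2)
      = (\<lambda>w. of_real ((A w + B w)\<^sup>2))"
    by simp_all
  have "(\<lambda>w. a + of_real s * Z w) = (\<lambda>w. of_real (Re a + s * x w) + \<i> * of_real (Im a + s * y w))"
    by (simp add: fun_eq_iff complex_eq_iff x_def y_def)
  then have "has_bochner_integral M (\<lambda>w. a + of_real s * Z w) (of_real (Re a) + \<i> * of_real (Im a))"
    by (simp only:) (intro has_bochner_integral_add has_bochner_integral_mult_right
        has_bochner_integral_of_real affine_normal_moments(1)[OF x \<sigma>(1)] affine_normal_moments(1)[OF y \<sigma>(1)])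
  also have "of_real (Re a) + \<i> * of_real (Im a) = a"
    by (simp add: complex_eq_iff)
  finally show "has_bochner_integral M (\<lambda>w. a + of_real s * Z w) a" .
  have A: "has_bochner_integral M A ((Re a)\<^sup>2 + s\<^sup>2 * \<sigma>\<^sup>2)"
    and B: "has_bochner_integral M B ((Im a)\<^sup>2 + s\<^sup>2 * \<sigma>\<^sup>2)"
    unfolding A_def B_def by (rule affine_normal_moments(2)[OF x \<sigma>(1)] affine_normal_moments(2)[OF y \<sigma>(1)])+
  have "has_bochner_integral M (\<lambda>w. (a + of_real s * Z w) * cnj (a + of_real s * Z w))
      (of_real ((Re a)\<^sup>2 + s\<^sup>2 * \<sigma>\<^sup>2 + ((Im a)\<^sup>2 + s\<^sup>2 * \<sigma>\<^sup>2)))"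
    unfolding sqnorm_AB by (intro has_bochner_integral_of_real has_bochner_integral_add A B)
  also have "(Re a)\<^sup>2 + s\<^sup>2 * \<sigma>\<^sup>2 + ((Im a)\<^sup>2 + s\<^sup>2 * \<sigma>\<^sup>2) = (cmod a)\<^sup>2 + s\<^sup>2 * v"
    by (simp add: \<sigma>(2) cmod_power2)
  finally show "has_bochner_integral M (\<lambda>w. (a + of_real s * Z w) * cnj (a + of_real s * Z w))
      (of_real ((cmod a)\<^sup>2 + s\<^sup>2 * v))" .
  have "indep_var borel ((\<lambda>t. (Re a + s * t)\<^sup>2) \<circ> x) borel ((\<lambda>t. (Im a + s * t)\<^sup>2) \<circ> y)"
    by (rule indep_var_compose[OF xy]) auto
  then have AB_indep: "indep_var borel A borel B"
    by (simp add: A_def B_def comp_def)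
  have A2: "has_bochner_integral M (\<lambda>w. (A w)\<^sup>2) ((Re a) ^ 4 + 6 * (Re a)\<^sup>2 * s\<^sup>2 * \<sigma>\<^sup>2 + 3 * s ^ 4 * \<sigma> ^ 4)"
    using affine_normal_moments(3)[OF x \<sigma>(1), of "Re a" s] by (simp add: A_def flip: power_mult)
  have B2: "has_bochner_integral M (\<lambda>w. (B w)\<^sup>2) ((Im a) ^ 4 + 6 * (Im a)\<^sup>2 * s\<^sup>2 * \<sigma>\<^sup>2 + 3 * s ^ 4 * \<sigma> ^ 4)"
    using affine_normal_moments(3)[OF y \<sigma>(1), of "Im a" s] by (simp add: B_def flip: power_mult)
  have "has_bochner_integral M (\<lambda>w. ((a + of_real s * Z w) * cnj (a + of_real s * Z w))\<^sup>2)
      (of_real (((Re a) ^ 4 + 6 * (Re a)\<^sup>2 * s\<^sup>2 * \<sigma>\<^sup>2 + 3 * s ^ 4 * \<sigma> ^ 4)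
        + 2 * (((Re a)\<^sup>2 + s\<^sup>2 * \<sigma>\<^sup>2) * ((Im a)\<^sup>2 + s\<^sup>2 * \<sigma>\<^sup>2))
        + ((Im a) ^ 4 + 6 * (Im a)\<^sup>2 * s\<^sup>2 * \<sigma>\<^sup>2 + 3 * s ^ 4 * \<sigma> ^ 4)))"
    unfolding sqnorm_AB_sq
    by (intro has_bochner_integral_of_real indep_var_has_bochner_integral_sum_square[OF AB_indep A B A2 B2])
  also have "((Re a) ^ 4 + 6 * (Re a)\<^sup>2 * s\<^sup>2 * \<sigma>\<^sup>2 + 3 * s ^ 4 * \<sigma> ^ 4)
        + 2 * (((Re a)\<^sup>2 + s\<^sup>2 * \<sigma>\<^sup>2) * ((Im a)\<^sup>2 + s\<^sup>2 * \<sigma>\<^sup>2))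
        + ((Im a) ^ 4 + 6 * (Im a)\<^sup>2 * s\<^sup>2 * \<sigma>\<^sup>2 + 3 * s ^ 4 * \<sigma> ^ 4)
      = (cmod a) ^ 4 + 4 * (cmod a)\<^sup>2 * (s\<^sup>2 * v) + 2 * (s\<^sup>2 * v)\<^sup>2"
  proof -
    have "(cmod a) ^ 4 = ((Re a)\<^sup>2 + (Im a)\<^sup>2)\<^sup>2" "v = 2 * \<sigma>\<^sup>2"
      by (simp_all add: \<sigma>(2) flip: cmod_power2 power_mult)
    then show ?thesis
      unfolding cmod_power2 by (simp add: power2_eq_square power4_eq_xxxx algebra_simps)
  qed
  finally show "has_bochner_integral M (\<lambda>w. ((a + of_real s * Z w) * cnj (a + of_real s * Z w))\<^sup>2)
      (of_real ((cmod a) ^ 4 + 4 * (cmod a)\<^sup>2 * (s\<^sup>2 * v) + 2 * (s\<^sup>2 * v)\<^sup>2))" .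
qed

lemma (in prob_space) indep_vars_affine:
  fixes X :: "'i \<Rightarrow> 'a \<Rightarrow> 'b::real_normed_algebra"
  assumes "indep_vars (\<lambda>_. borel) X I"
  shows "indep_vars (\<lambda>_. borel) (\<lambda>p w. a p + c * X p w) I"
  using assms by (rule indep_vars_compose2[where Y = "\<lambda>p z. a p + c * z"])
    (auto intro!: borel_measurable_continuous_onI continuous_intros)

lemma (in prob_space) indep_vars_has_bochner_integral_prod:
  fixes Y :: "'i \<Rightarrow> 'a \<Rightarrow> 'c::topological_space"
    and f :: "'i \<Rightarrow> 'c \<Rightarrow> 'b::{real_normed_field, banach, second_countable_topology}"
  assumes "indep_vars (\<lambda>_. borel) Y K" "I \<subseteq> K" "finite I"
    and "\<And>p. p \<in> I \<Longrightarrow> f p \<in> borel_measurable borel"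
    and "\<And>p. p \<in> I \<Longrightarrow> has_bochner_integral M (\<lambda>w. f p (Y p w)) (c p)"
  shows "has_bochner_integral M (\<lambda>w. \<Prod>p\<in>I. f p (Y p w)) (\<Prod>p\<in>I. c p)"
proof -
  have indep: "indep_vars (\<lambda>_. borel) (\<lambda>p w. f p (Y p w)) I"
    using indep_vars_subset[OF assms(1,2)] by (rule indep_vars_compose2) (rule assms(4))
  have integrable: "\<And>p. p \<in> I \<Longrightarrow> integrable M (\<lambda>w. f p (Y p w))"
    and integral: "\<And>p. p \<in> I \<Longrightarrow> integral\<^sup>L M (\<lambda>w. f p (Y p w)) = c p"
    using assms(5) by (simp_all add: has_bochner_integral_iff)
  show ?thesis
    using indep_vars_lebesgue_integral[OF assms(3) indep integrable]
      indep_vars_integrable[OF assms(3) indep integrable] integral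
    by (simp add: has_bochner_integral_iff)
qed

lemma (in prob_space) indep_vars_has_bochner_integral_mult:
  fixes Y :: "'i \<Rightarrow> 'a \<Rightarrow> 'c::topological_space"
    and f g :: "'c \<Rightarrow> 'b::{real_normed_field, banach, second_countable_topology}"
  assumes "indep_vars (\<lambda>_. borel) Y K" "p \<in> K" "q \<in> K" "p \<noteq> q"
    and "f \<in> borel_measurable borel" "g \<in> borel_measurable borel"
    and "has_bochner_integral M (\<lambda>w. f (Y p w)) x" "has_bochner_integral M (\<lambda>w. g (Y q w)) y"
  shows "has_bochner_integral M (\<lambda>w. f (Y p w) * g (Y q w)) (x * y)"
proof -
  have "has_bochner_integral M (\<lambda>w. \<Prod>r\<in>{p, q}. (if r = p then f else g) (Y r w))
      (\<Prod>r\<in>{p, q}. if r = p then x else y)"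
    using assms by (intro indep_vars_has_bochner_integral_prod[OF assms(1)]) auto
  then show ?thesis
    using assms(4) by simp
qed

text \<open>
  For independent entries with the moments above and \<open>w = |a|\<^sup>2\<close>, this is
  \<open>E (\<psi>\<^sub>i\<^sub>\<mu> \<psi>\<^sub>j\<^sub>\<mu>\<^sup>* \<psi>\<^sub>j\<^sub>\<nu> \<psi>\<^sub>i\<^sub>\<nu>\<^sup>*) - a\<^sub>i\<^sub>\<mu> a\<^sub>j\<^sub>\<mu>\<^sup>* a\<^sub>j\<^sub>\<nu> a\<^sub>i\<^sub>\<nu>\<^sup>*\<close>.
\<close>

definition purity_moment_correction ::
    "real \<Rightarrow> (nat \<Rightarrow> nat \<Rightarrow> real) \<Rightarrow> nat \<Rightarrow> nat \<Rightarrow> nat \<Rightarrow> nat \<Rightarrow> real" where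
  "purity_moment_correction t w i j mu nu =
     (if i = j then t * (w i mu + w i nu) else 0) + (if mu = nu then t * (w i mu + w j mu) else 0)
     + t\<^sup>2 * (of_bool (i = j) + of_bool (mu = nu))"

lemma (in prob_space) purity_term_expectation:
  fixes Y :: "nat \<Rightarrow> nat \<Rightarrow> 'a \<Rightarrow> complex" and a :: "nat \<Rightarrow> nat \<Rightarrow> complex"
  assumes indep: "indep_vars (\<lambda>_. borel) (\<lambda>(i, mu). Y i mu) ({..<n} \<times> {..<m})"
    and mean: "\<And>i mu. i < n \<Longrightarrow> mu < m \<Longrightarrow> has_bochner_integral M (Y i mu) (a i mu)"
    and second: "\<And>i mu. i < n \<Longrightarrow> mu < m \<Longrightarrow>
      has_bochner_integral M (\<lambda>w. Y i mu w * cnj (Y i mu w)) (of_real ((cmod (a i mu))\<^sup>2 + t))"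
    and fourth: "\<And>i mu. i < n \<Longrightarrow> mu < m \<Longrightarrow>
      has_bochner_integral M (\<lambda>w. (Y i mu w * cnj (Y i mu w))\<^sup>2)
        (of_real ((cmod (a i mu)) ^ 4 + 4 * (cmod (a i mu))\<^sup>2 * t + 2 * t\<^sup>2))"
    and ij: "i < n" "j < n" and mu_nu: "mu < m" "nu < m"
  shows "has_bochner_integral M (\<lambda>w. Y i mu w * cnj (Y j mu w) * (Y j nu w * cnj (Y i nu w)))
    (a i mu * cnj (a j mu) * (a j nu * cnj (a i nu))
      + of_real (purity_moment_correction t (\<lambda>i mu. (cmod (a i mu))\<^sup>2) i j mu nu))"
proof -
  define Yp where "Yp = (\<lambda>(i, mu). Y i mu)"
  have mult_cnj: "z * cnj z = of_real ((cmod z)\<^sup>2)" for z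
    by (metis complex_norm_square of_real_power)
  have sqnorm_product: "has_bochner_integral M (\<lambda>w. Y k l w * cnj (Y k l w) * (Y k' l' w * cnj (Y k' l' w)))
      (of_real ((cmod (a k l))\<^sup>2 + t) * of_real ((cmod (a k' l'))\<^sup>2 + t))"
    if "(k, l) \<noteq> (k', l')" "k < n" "k' < n" "l < m" "l' < m" for k l k' l'
  proof -
    have "has_bochner_integral M (\<lambda>w. Yp (k, l) w * cnj (Yp (k, l) w) * (Yp (k', l') w * cnj (Yp (k', l') w)))
        (of_real ((cmod (a k l))\<^sup>2 + t) * of_real ((cmod (a k' l'))\<^sup>2 + t))"
      using that
      by (intro indep_vars_has_bochner_integral_mult[OF indep[folded Yp_def],
            where f = "\<lambda>z. z * cnj z" and g = "\<lambda>z. z * cnj z"])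
        (auto simp: Yp_def simp del: of_real_add of_real_power
          intro!: second borel_measurable_continuous_onI continuous_intros)
    then show ?thesis
      by (simp add: Yp_def)
  qed
  consider "i = j" "mu = nu" | "i = j" "mu \<noteq> nu" | "i \<noteq> j" "mu = nu" | "i \<noteq> j" "mu \<noteq> nu"
    by blast
  then show ?thesis
  proof cases
    case 1
    then show ?thesis
      using fourth[OF ij(1) mu_nu(1)]
      by (simp add: purity_moment_correction_def mult_cnj power2_eq_square power4_eq_xxxx algebra_simps
          flip: of_real_mult of_real_add)
  next
    case 2
    then show ?thesis
      using sqnorm_product[of i mu i nu] ij mu_nu
      by (simp add: purity_moment_correction_def mult_cnj power2_eq_square algebra_simps
          flip: of_real_mult of_real_add)
  next
    case 3
    have swap: "x * cnj y * (y * cnj x) = x * cnj x * (y * cnj y)" for x y :: complex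
      by (simp add: ac_simps)
    show ?thesis
      unfolding \<open>mu = nu\<close>[symmetric] swap using 3 sqnorm_product[of i mu j mu] ij mu_nu
      by (simp add: purity_moment_correction_def mult_cnj power2_eq_square algebra_simps
          flip: of_real_mult of_real_add)
  next
    case 4
    define f where "f p = (if p \<in> {(j, mu), (i, nu)} then cnj else id)" for p :: "nat \<times> nat"
    have "has_bochner_integral M (\<lambda>w. \<Prod>p\<in>{(i, mu), (j, mu), (j, nu), (i, nu)}. f p (Yp p w))
        (\<Prod>p\<in>{(i, mu), (j, mu), (j, nu), (i, nu)}. f p (case p of (k, l) \<Rightarrow> a k l))"
      using ij mu_nu
      by (intro indep_vars_has_bochner_integral_prod[OF indep[folded Yp_def]])
        (auto simp: f_def Yp_def intro!: mean has_bochner_integral_cnj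
          borel_measurable_continuous_onI continuous_intros)
    then show ?thesis
      using 4 by (simp add: f_def Yp_def purity_moment_correction_def algebra_simps)
  qed
qed

lemma sum_purity_moment_correction:
  "(\<Sum>i<n. \<Sum>j<n. \<Sum>mu<m. \<Sum>nu<m. purity_moment_correction t w i j mu nu)
     = 2 * t * (real n + real m) * (\<Sum>i<n. \<Sum>mu<m. w i mu) + t\<^sup>2 * real n * real m * (real n + real m)"
proof -
  let ?W = "\<Sum>i<n. \<Sum>mu<m. w i mu"
  have same_row: "(\<Sum>i<n. \<Sum>j<n. \<Sum>mu<m. \<Sum>nu<m. if i = j then t * (w i mu + w i nu) else 0) = 2 * t * real m * ?W"
  proof -
    have "(\<Sum>mu<m. \<Sum>nu<m. if i = j then t * (w i mu + w i nu) else 0)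
        = (if i = j then \<Sum>mu<m. \<Sum>nu<m. t * (w i mu + w i nu) else 0)" for i j :: nat
      by simp
    then show ?thesis
      by (simp add: sum.distrib sum_distrib_left[symmetric] algebra_simps)
  qed
  have same_col: "(\<Sum>i<n. \<Sum>j<n. \<Sum>mu<m. \<Sum>nu<m. if mu = nu then t * (w i mu + w j mu) else 0) = 2 * t * real n * ?W"
    by (simp add: sum.distrib sum_distrib_left[symmetric] algebra_simps)
  have "(\<Sum>i<n. \<Sum>j<n. \<Sum>mu<m. \<Sum>nu<m. t\<^sup>2 * (of_bool (i = j) + of_bool (mu = nu) :: real))
      = t\<^sup>2 * real n * real m * (real n + real m)"
    by (simp add: sum.distrib sum_distrib_left[symmetric] algebra_simps)
  then show ?thesis
    unfolding purity_moment_correction_def sum.distrib same_row same_col by (simp add: algebra_simps)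
qed

lemma (in prob_space) expected_local_purity:
  fixes Y :: "nat \<Rightarrow> nat \<Rightarrow> 'a \<Rightarrow> complex" and a :: "nat \<Rightarrow> nat \<Rightarrow> complex"
  assumes "indep_vars (\<lambda>_. borel) (\<lambda>(i, mu). Y i mu) ({..<n} \<times> {..<m})"
    and "\<And>i mu. i < n \<Longrightarrow> mu < m \<Longrightarrow> has_bochner_integral M (Y i mu) (a i mu)"
    and "\<And>i mu. i < n \<Longrightarrow> mu < m \<Longrightarrow>
      has_bochner_integral M (\<lambda>w. Y i mu w * cnj (Y i mu w)) (of_real ((cmod (a i mu))\<^sup>2 + t))"
    and "\<And>i mu. i < n \<Longrightarrow> mu < m \<Longrightarrow>
      has_bochner_integral M (\<lambda>w. (Y i mu w * cnj (Y i mu w))\<^sup>2)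
        (of_real ((cmod (a i mu)) ^ 4 + 4 * (cmod (a i mu))\<^sup>2 * t + 2 * t\<^sup>2))"
  shows "has_bochner_integral M (\<lambda>w. local_purity n m (\<lambda>i mu. Y i mu w))
    (local_purity n m a
      + of_real (2 * t * (real n + real m) * sqnorm n m a + t\<^sup>2 * real n * real m * (real n + real m)))"
proof -
  have expand: "local_purity n m f
      = (\<Sum>i<n. \<Sum>j<n. \<Sum>mu<m. \<Sum>nu<m. f i mu * cnj (f j mu) * (f j nu * cnj (f i nu)))" for f
    by (simp add: local_purity_def ptrace_B_def sum_product)
  have "has_bochner_integral M (\<lambda>w. local_purity n m (\<lambda>i mu. Y i mu w))
      (\<Sum>i<n. \<Sum>j<n. \<Sum>mu<m. \<Sum>nu<m. a i mu * cnj (a j mu) * (a j nu * cnj (a i nu))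
        + of_real (purity_moment_correction t (\<lambda>i mu. (cmod (a i mu))\<^sup>2) i j mu nu))"
    unfolding expand by (intro has_bochner_integral_sum purity_term_expectation[OF assms]) auto
  then show ?thesis
    by (simp add: expand sum.distrib sum_purity_moment_correction sqnorm_def flip: of_real_sum)
qed

theorem mainTheorem1:
  fixes N M :: nat
    and P :: "'w measure"
    and X :: "nat \<Rightarrow> nat \<Rightarrow> 'w \<Rightarrow> complex"
    and phi0 :: "nat \<Rightarrow> nat \<Rightarrow> complex"
    and \<epsilon> :: real
  assumes "0 < N" and "N \<le> M"
    and "sqnorm N M phi0 = 1"
    and "prob_space P"
    and "prob_space.indep_vars P (\<lambda>_. borel) (\<lambda>(i, mu). X i mu) ({..<N} \<times> {..<M})"
    and "\<And>i mu. i < N \<Longrightarrow> mu < M \<Longrightarrow> circ_gaussian P (X i mu) (1 / (real N * real M))"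
    and "0 \<le> \<epsilon>" and "\<epsilon> \<le> 1"
  shows "(\<integral>w. local_purity N M
            (\<lambda>i mu. complex_of_real \<epsilon> * phi0 i mu
                     + complex_of_real (sqrt (1 - \<epsilon>\<^sup>2)) * X i mu w) \<partial>P)
         = complex_of_real (\<epsilon> ^ 4) * local_purity N M phi0
             + complex_of_real ((1 - \<epsilon> ^ 4) * ((real M + real N) / (real M * real N)))"
proof -
  interpret prob_space P by fact
  define s where "s = sqrt (1 - \<epsilon>\<^sup>2)"
  define v where "v = 1 / (real N * real M)"
  define a where "a i mu = of_real \<epsilon> * phi0 i mu" for i mu
  have v: "0 < v"
    using assms(1,2) by (simp add: v_def)
  have s2: "s\<^sup>2 = 1 - \<epsilon>\<^sup>2"
    using assms(7,8) by (simp add: s_def power_le_one)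
  have indep: "indep_vars (\<lambda>_. borel) (\<lambda>(i, mu) w. a i mu + of_real s * X i mu w) ({..<N} \<times> {..<M})"
    using indep_vars_affine[OF assms(5), of "\<lambda>(i, mu). a i mu" "of_real s"] by (simp add: split_beta')
  have purity_a: "local_purity N M a = of_real (\<epsilon> ^ 4) * local_purity N M phi0"
    by (simp add: local_purity_def ptrace_B_def a_def sum_distrib_left power4_eq_xxxx ac_simps)
  have sqnorm_a: "sqnorm N M a = \<epsilon>\<^sup>2"
    using assms(3) by (simp add: sqnorm_def a_def norm_mult power_mult_distrib flip: sum_distrib_left)
  have correction: "2 * (s\<^sup>2 * v) * (real N + real M) * \<epsilon>\<^sup>2 + (s\<^sup>2 * v)\<^sup>2 * real N * real M * (real N + real M)
      = (1 - \<epsilon> ^ 4) * ((real M + real N) / (real M * real N))"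
    unfolding s2 v_def using assms(1,2) by (simp add: field_simps power2_eq_square power4_eq_xxxx)
  have "(\<integral>w. local_purity N M (\<lambda>i mu. a i mu + of_real s * X i mu w) \<partial>P)
      = local_purity N M a + of_real (2 * (s\<^sup>2 * v) * (real N + real M) * sqnorm N M a
        + (s\<^sup>2 * v)\<^sup>2 * real N * real M * (real N + real M))"
    using assms(6) v unfolding v_def[symmetric]
    by (intro has_bochner_integral_integral_eq expected_local_purity[OF indep] circ_gaussian_affine_moments)
  also have "\<dots> = of_real (\<epsilon> ^ 4) * local_purity N M phi0
      + of_real ((1 - \<epsilon> ^ 4) * ((real M + real N) / (real M * real N)))"
    unfolding purity_a sqnorm_a correction ..
  finally show ?thesis
    by (simp only: a_def s_def)
qed

end
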